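(* Let $k\ge 2$, $N\ge 2$. For each $j\in\{0,\ldots,k-1\}$ the right eigenvector $v_j$ of $T$ for the eigenvalue $N^{-j}$ can be normalized by $v_j[0]=1$, and then $$\sum_{i=0}^{k-1}\binom{k-1}{i}v_j[i]\,x^i = (1+x)^{k-1-j}\,Q_j(x)$$ for a polynomial $Q_j$ of degree $j$ with $Q_j(0)=1$ and $x^jQ_j(1/x)=(-1)^jQ_j(x)$. Moreover $v_j[k-1-i]=(-1)^jv_j[i]$ for all $i$, $\sum_i u_m[i]v_j[i]=\delta_{mj}$ where $u_m$ are the left eigenvectors defined by $\sum_i u_m[i]x^i=\frac{(-1)^m|s(k,k-m)|}{k!}(x-1)^mA_{k-m}(x)$, and in particular $v_0=(1,\ldots,1)$, $v_1[i]=(k-1-2i)/(k-1)$, and $v_{k-1}[i]=(-1)^i/\binom{k-1}{i}$.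
   Context: $H[c,c'] = \#\{(d_1,\ldots,d_k)\in\{0,\ldots,N-1\}^k : \lfloor (d_1+\cdots+d_k+c)/N\rfloor = c'\}$ for $c,c'\in\{0,\ldots,k-1\}$ and $T=N^{-k}H$ (row-stochastic Holte matrix); its eigenvalues $N^{-j}$, $j=0,\ldots,k-1$, are simple. Right eigenvector: $Tv=\lambda v$. $A(n,i)$ is the Eulerian number (permutations of $\{1,\ldots,n\}$ with $i$ descents), $A_n(x)=\sum_{i=0}^{n-1}A(n,i)x^i$, and $|s(k,m)|$ is the coefficient of $x^m$ in $x(x+1)\cdots(x+k-1)$. *)

theory Defs
  imports Complex_Main "HOL-Computational_Algebra.Polynomial" "HOL-Combinatorics.Combinatorics"
begin

definition holte_H :: "nat \<Rightarrow> nat \<Rightarrow> nat \<Rightarrow> nat \<Rightarrow> nat" where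
  "holte_H N k c c' = card {d \<in> {0..<k} \<rightarrow>\<^sub>E {0..<N}. (sum d {0..<k} + c) div N = c'}"

definition holte_T :: "nat \<Rightarrow> nat \<Rightarrow> nat \<Rightarrow> nat \<Rightarrow> real" where
  "holte_T N k c c' = real (holte_H N k c c') / real N ^ k"

definition is_right_eigvec :: "nat \<Rightarrow> nat \<Rightarrow> real \<Rightarrow> (nat \<Rightarrow> real) \<Rightarrow> bool" where
  "is_right_eigvec N k lam v \<longleftrightarrow>
     (\<forall>c<k. (\<Sum>c'<k. holte_T N k c c' * v c') = lam * v c)"

definition eulerian :: "nat \<Rightarrow> nat \<Rightarrow> nat" where
  "eulerian n i = card {p. p permutes {1..n} \<and> card {j \<in> {1..<n}. p j > p (Suc j)} = i}"

definition eulerian_poly :: "nat \<Rightarrow> real poly" where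
  "eulerian_poly n = (\<Sum>i<n. monom (real (eulerian n i)) i)"

(* left eigenvector u_m: sum_i u_m[i] x^i = (-1)^m |s(k,k-m)| / k! (x-1)^m A_{k-m}(x);
   |s(k,m)| is the unsigned Stirling number of the first kind (library: stirling) *)
definition left_u :: "nat \<Rightarrow> nat \<Rightarrow> nat \<Rightarrow> real" where
  "left_u k m i = coeff (smult ((-1) ^ m * real (stirling k (k - m)) / fact k)
                          ([:-1, 1:] ^ m * eulerian_poly (k - m))) i"

end

theory Submission
  imports Defs "HOL-Computational_Algebra.Formal_Power_Series" "Jordan_Normal_Form.Determinant"
begin

(* Let B_i(y) = (y + i) gchoose k. Summing over the digit vectors shows
   sum_q H[c,q] B_q(a) = B_c(N a) for all natural a, hence as polynomials in y, so the
   coefficients of y^(k-j) form a right eigenvector of T for the eigenvalue N^(-j).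
   Worpitzky's identity sum_i A(n,i) ((y + i) gchoose n) = y^n, multiplied by powers of x - 1,
   gives sum_c [x^c]((x - 1)^m A_(k-m)(x)) B_c(y) = y^(k-m); comparing coefficients of y^(k-j)
   yields the biorthogonality with the u_m. Hence the v_j form a basis with dual basis (u_m),
   each u_m is a left eigenvector, and every eigenspace is a line. The reflection
   B_(k-1-i)(y) = (-1)^k B_i(-y) gives the symmetry of v_j. By Vandermonde, v_j[i] is a
   combination of the (i choose r) with r <= j, and
   sum_i (k-1 choose i) (i choose r) x^i = (k-1 choose r) x^r (1 + x)^(k-1-r),
   so the generating polynomial of v_j is divisible by (1 + x)^(k-1-j). *)

section \<open>Carries of digit sums\<close>

abbreviation digit_vectors :: "nat \<Rightarrow> nat \<Rightarrow> (nat \<Rightarrow> nat) set" where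
  "digit_vectors N k \<equiv> {0..<k} \<rightarrow>\<^sub>E {0..<N}"

lemma sum_digit_vectors_Suc:
  fixes F :: "nat \<Rightarrow> 'b::comm_monoid_add"
  shows "(\<Sum>d\<in>digit_vectors N (Suc k). F (sum d {0..<Suc k}))
       = (\<Sum>y<N. \<Sum>d\<in>digit_vectors N k. F (y + sum d {0..<k}))"
proof -
  let ?ext = "\<lambda>(y, d). d(k := y)"
  have inj: "inj_on ?ext ({0..<N} \<times> digit_vectors N k)"
    by (auto intro!: inj_combinator[of k "{0..<k}" "\<lambda>_. {0..<N}", simplified])
  have sum_ext: "sum (d(k := y)) {0..<Suc k} = y + sum d {0..<k}" for d :: "nat \<Rightarrow> nat" and y
    by (simp add: add.commute)
  have "(\<Sum>d\<in>digit_vectors N (Suc k). F (sum d {0..<Suc k}))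
      = (\<Sum>d\<in>?ext ` ({0..<N} \<times> digit_vectors N k). F (sum d {0..<Suc k}))"
    by (simp add: atLeast0_lessThan_Suc PiE_insert_eq)
  also have "\<dots> = (\<Sum>(y, d)\<in>{0..<N} \<times> digit_vectors N k. F (sum (d(k := y)) {0..<Suc k}))"
    by (subst sum.reindex[OF inj]) (simp only: comp_def split_def)
  also have "\<dots> = (\<Sum>(y, d)\<in>{0..<N} \<times> digit_vectors N k. F (y + sum d {0..<k}))"
    by (simp only: sum_ext)
  finally show ?thesis
    by (simp add: sum.cartesian_product atLeast0LessThan)
qed

lemma digit_sum_carry_less:
  assumes N: "N \<ge> 1" and c: "c < k" and d: "d \<in> digit_vectors N k"
  shows "(sum d {0..<k} + c) div N < k"
proof -
  have "sum d {0..<k} \<le> (\<Sum>_\<in>{0..<k}. N - 1)"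
    using d by (intro sum_mono) (auto simp: PiE_def Pi_def less_Suc_eq_le)
  then have "sum d {0..<k} + c < k * (N - 1) + k"
    using c by simp
  also have "\<dots> = k * N"
    using N by (simp add: algebra_simps)
  finally show ?thesis
    by (simp add: less_mult_imp_div_less)
qed

lemma sum_div_choose_Suc:
  assumes N: "N \<ge> 1"
  shows "(\<Sum>y<N. (Suc (M + y) div N) choose Suc k)
       = (\<Sum>y<N. ((M + y) div N) choose Suc k) + ((M div N) choose k)"
proof -
  define f where "f x = (x div N) choose Suc k" for x
  have "(\<Sum>y<N. f (Suc (M + y))) + f M = (\<Sum>y<N. f (M + y)) + f (M + N)"
    by (induction N) auto
  moreover have "(M + N) div N = Suc (M div N)"
    using N by simp
  ultimately show ?thesis
    by (simp add: f_def)
qed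

lemma sum_digit_vectors_carry_choose:
  assumes N: "N \<ge> 1"
  shows "(\<Sum>d\<in>digit_vectors N k. ((M + sum d {0..<k}) div N) choose k) = M choose k"
proof (induction k arbitrary: M)
  case 0
  then show ?case by simp
next
  case (Suc k)
  define F where "F M = (\<Sum>d\<in>digit_vectors N (Suc k). ((M + sum d {0..<Suc k}) div N) choose Suc k)" for M
  have F_split: "F M = (\<Sum>d\<in>digit_vectors N k. \<Sum>y<N. ((M + sum d {0..<k} + y) div N) choose Suc k)" for M
    unfolding F_def sum_digit_vectors_Suc[where F = "\<lambda>s. ((M + s) div N) choose Suc k"]
    by (subst sum.swap) (simp add: ac_simps)
  have F_Suc: "F (Suc M) = F M + (M choose k)" for M
    by (simp add: F_split sum_div_choose_Suc[OF N] sum.distrib Suc.IH)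
  have F_0: "F 0 = 0"
    unfolding F_def
    by (intro sum.neutral ballI) (use digit_sum_carry_less[OF N, of 0 "Suc k"] in simp)
  have "F M = M choose Suc k" for M
    by (induction M) (simp_all add: F_0 F_Suc)
  then show ?case
    unfolding F_def .
qed

lemma holte_H_sum:
  assumes N: "N \<ge> 1" and c: "c < k"
  shows "(\<Sum>q<k. real (holte_H N k c q) * g q)
       = (\<Sum>d\<in>digit_vectors N k. g ((sum d {0..<k} + c) div N))"
proof -
  let ?carry = "\<lambda>d. (sum d {0..<k} + c) div N"
  have "(\<Sum>q<k. real (holte_H N k c q) * g q)
      = (\<Sum>q<k. \<Sum>d\<in>{d\<in>digit_vectors N k. ?carry d = q}. g (?carry d))"
    by (simp add: holte_H_def)
  also have "\<dots> = (\<Sum>d\<in>digit_vectors N k. g (?carry d))"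
    by (rule sum.group) (auto simp: finite_PiE digit_sum_carry_less[OF N c])
  finally show ?thesis .
qed

lemma holte_H_choose:
  assumes N: "N \<ge> 1" and c: "c < k"
  shows "(\<Sum>q<k. real (holte_H N k c q) * real ((a + q) choose k)) = real ((N * a + c) choose k)"
proof -
  have shift: "a + (sum d {0..<k} + c) div N = (N * a + c + sum d {0..<k}) div N" for d :: "nat \<Rightarrow> nat"
    using N div_mult_self2[of N "sum d {0..<k} + c" a] by (simp add: ac_simps)
  have "(\<Sum>q<k. real (holte_H N k c q) * real ((a + q) choose k))
      = real (\<Sum>d\<in>digit_vectors N k. ((N * a + c + sum d {0..<k}) div N) choose k)"
    by (simp add: holte_H_sum[OF N c] shift)
  then show ?thesis
    by (simp only: sum_digit_vectors_carry_choose[OF N])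
qed

section \<open>Binomial polynomials and the right eigenvectors\<close>

definition binom_poly :: "nat \<Rightarrow> nat \<Rightarrow> real poly" where
  "binom_poly k i = Polynomial.smult (1 / fact k) (\<Prod>t<k. [:real i - real t, 1:])"

lemma poly_binom_poly: "poly (binom_poly k i) y = (y + real i) gchoose k"
  by (simp add: binom_poly_def poly_prod gbinomial_prod_rev atLeast0LessThan algebra_simps)

lemma poly_eqI_of_nat:
  fixes p q :: "'a :: {idom, ring_char_0} poly"
  assumes "\<And>n. poly p (of_nat n) = poly q (of_nat n)"
  shows "p = q"
proof (rule ccontr)
  assume "p \<noteq> q"
  then have "finite {x. poly (p - q) x = 0}"
    by (intro poly_roots_finite) simp
  moreover have "range of_nat \<subseteq> {x. poly (p - q) x = 0}"
    using assms by auto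
  ultimately have "finite (range (of_nat :: nat \<Rightarrow> 'a))"
    by (rule finite_subset[rotated])
  then show False
    using finite_imageD[of "of_nat :: nat \<Rightarrow> 'a" UNIV] by simp
qed

lemma holte_H_binom_poly:
  assumes N: "N \<ge> 1" and c: "c < k"
  shows "(\<Sum>q<k. Polynomial.smult (real (holte_H N k c q)) (binom_poly k q)) = pcompose (binom_poly k c) [:0, real N:]"
proof (rule poly_eqI_of_nat)
  fix a
  have "poly (\<Sum>q<k. Polynomial.smult (real (holte_H N k c q)) (binom_poly k q)) (real a)
      = (\<Sum>q<k. real (holte_H N k c q) * real ((a + q) choose k))"
    by (simp add: poly_sum poly_binom_poly binomial_gbinomial)
  also have "\<dots> = real ((N * a + c) choose k)"
    by (rule holte_H_choose[OF N c])
  also have "\<dots> = poly (pcompose (binom_poly k c) [:0, real N:]) (real a)"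
    by (simp add: poly_pcompose poly_binom_poly binomial_gbinomial mult.commute)
  finally show "poly (\<Sum>q<k. Polynomial.smult (real (holte_H N k c q)) (binom_poly k q)) (real a)
      = poly (pcompose (binom_poly k c) [:0, real N:]) (real a)" .
qed

definition holte_raw_eigvec :: "nat \<Rightarrow> nat \<Rightarrow> nat \<Rightarrow> real" where
  "holte_raw_eigvec k j i = coeff (binom_poly k i) (k - j)"

lemma holte_raw_eigvec_right:
  assumes N: "N \<ge> 1" and j: "j \<le> k"
  shows "is_right_eigvec N k (1 / real N ^ j) (holte_raw_eigvec k j)"
  unfolding is_right_eigvec_def
proof (intro allI impI)
  fix c assume c: "c < k"
  have H: "(\<Sum>q<k. real (holte_H N k c q) * holte_raw_eigvec k j q)
      = real N ^ (k - j) * holte_raw_eigvec k j c"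
    using arg_cong[OF holte_H_binom_poly[OF N c], of "\<lambda>p. coeff p (k - j)"]
    by (simp add: coeff_sum coeff_pcompose_linear holte_raw_eigvec_def)
  have "real N ^ k = real N ^ (k - j) * real N ^ j"
    using j by (simp flip: power_add)
  then show "(\<Sum>q<k. holte_T N k c q * holte_raw_eigvec k j q) = 1 / real N ^ j * holte_raw_eigvec k j c"
    using N H by (simp add: holte_T_def sum_divide_distrib[symmetric])
qed

lemma coeff_eqI_poly_sum:
  fixes p :: "'a :: {idom, ring_char_0} poly"
  assumes "\<And>y. poly p y = (\<Sum>m\<le>K. a m * y ^ m)"
  shows "coeff p n = (if n \<le> K then a n else 0)"
proof -
  have "p = (\<Sum>m\<le>K. monom (a m) m)"
    by (rule poly_eq_poly_eq_iff[THEN iffD1]) (simp add: fun_eq_iff assms poly_sum poly_monom)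
  then show ?thesis
    by (simp add: coeff_sum)
qed

lemma minus_one_power_diff:
  assumes "j \<le> k"
  shows "(-1 :: 'a :: ring_1) ^ k * (-1) ^ (k - j) = (-1) ^ j"
proof -
  obtain d where k: "k = j + d"
    using assms le_Suc_ex by blast
  have "(-1 :: 'a) ^ d * (-1) ^ d = 1"
    by (simp flip: power_add mult_2)
  then show ?thesis
    by (simp add: k power_add mult.assoc)
qed

lemma coeff_binom_poly_0:
  "coeff (binom_poly k 0) n = (if n \<le> k then (-1) ^ k * (-1) ^ n * real (stirling k n) / fact k else 0)"
proof (rule coeff_eqI_poly_sum)
  fix y :: real
  have "poly (binom_poly k 0) y = (-1) ^ k * pochhammer (- y) k / fact k"
    by (simp add: poly_binom_poly gbinomial_pochhammer)
  also have "pochhammer (- y) k = (\<Sum>m\<le>k. real (stirling k m) * (- y) ^ m)"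
    by (rule stirling_pochhammer[symmetric])
  finally show "poly (binom_poly k 0) y = (\<Sum>m\<le>k. (-1) ^ k * (-1) ^ m * real (stirling k m) / fact k * y ^ m)"
    by (simp add: sum_divide_distrib sum_distrib_left power_minus[of y] mult_ac)
qed

lemma holte_raw_eigvec_0:
  "j \<le> k \<Longrightarrow> holte_raw_eigvec k j 0 = (-1) ^ j * real (stirling k (k - j)) / fact k"
  by (simp add: holte_raw_eigvec_def coeff_binom_poly_0 minus_one_power_diff)

lemma stirling_pos: "0 < m \<Longrightarrow> m \<le> n \<Longrightarrow> 0 < stirling n m"
proof (induction n arbitrary: m)
  case 0
  then show ?case by simp
next
  case (Suc n)
  then obtain m' where m: "m = Suc m'"
    by (cases m) auto
  show ?case
  proof (cases m')
    case 0
    then show ?thesis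
      by (simp only: m stirling_Suc_n_1) simp
  next
    case (Suc m'')
    then show ?thesis
      using Suc.IH[of m'] Suc.prems m by simp
  qed
qed

lemma holte_raw_eigvec_0_nonzero: "j < k \<Longrightarrow> holte_raw_eigvec k j 0 \<noteq> 0"
  using stirling_pos[of "k - j" k] by (simp add: holte_raw_eigvec_0)

lemma binom_poly_reflect:
  assumes "i < k"
  shows "binom_poly k (k - 1 - i) = Polynomial.smult ((-1) ^ k) (pcompose (binom_poly k i) [:0, -1:])"
proof (rule poly_eq_poly_eq_iff[THEN iffD1], rule ext)
  fix y
  have "real (k - 1 - i) = real k - 1 - real i"
    using assms by (simp add: of_nat_diff)
  then have "(y + real (k - 1 - i)) gchoose k = (-1) ^ k * ((- y + real i) gchoose k)"
    by (subst gbinomial_negated_upper) (simp add: algebra_simps)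
  then show "poly (binom_poly k (k - 1 - i)) y = poly (Polynomial.smult ((-1) ^ k) (pcompose (binom_poly k i) [:0, -1:])) y"
    by (simp add: poly_binom_poly poly_pcompose)
qed

lemma holte_raw_eigvec_reflect:
  assumes "i < k" and "j \<le> k"
  shows "holte_raw_eigvec k j (k - 1 - i) = (-1) ^ j * holte_raw_eigvec k j i"
  unfolding holte_raw_eigvec_def binom_poly_reflect[OF assms(1)] coeff_smult coeff_pcompose_linear
  by (metis minus_one_power_diff[OF assms(2)] mult.assoc)

lemma binom_poly_Vandermonde:
  "binom_poly k i = (\<Sum>r\<le>k. Polynomial.smult (real (i choose r)) (binom_poly (k - r) 0))"
proof (rule poly_eq_poly_eq_iff[THEN iffD1], rule ext)
  fix y
  have "(y + real i) gchoose k = (\<Sum>r\<le>k. (real i gchoose r) * (y gchoose (k - r)))"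
    using gbinomial_Vandermonde[of "real i" y k] by (simp add: atLeast0AtMost add.commute)
  then show "poly (binom_poly k i) y = poly (\<Sum>r\<le>k. Polynomial.smult (real (i choose r)) (binom_poly (k - r) 0)) y"
    by (simp add: poly_sum poly_binom_poly binomial_gbinomial)
qed

lemma holte_raw_eigvec_expand:
  assumes "j \<le> k"
  shows "holte_raw_eigvec k j i = (\<Sum>r\<le>j. real (i choose r) * coeff (binom_poly (k - r) 0) (k - j))"
proof -
  have "holte_raw_eigvec k j i = (\<Sum>r\<le>k. real (i choose r) * coeff (binom_poly (k - r) 0) (k - j))"
    by (subst holte_raw_eigvec_def, subst binom_poly_Vandermonde) (simp add: coeff_sum)
  also have "\<dots> = (\<Sum>r\<le>j. real (i choose r) * coeff (binom_poly (k - r) 0) (k - j))"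
    using assms by (intro sum.mono_neutral_right) (auto simp: coeff_binom_poly_0)
  finally show ?thesis .
qed

definition holte_eigvec :: "nat \<Rightarrow> nat \<Rightarrow> nat \<Rightarrow> real" where
  "holte_eigvec k j i = holte_raw_eigvec k j i / holte_raw_eigvec k j 0"

lemma holte_eigvec_0: "j < k \<Longrightarrow> holte_eigvec k j 0 = 1"
  using holte_raw_eigvec_0_nonzero by (simp add: holte_eigvec_def)

lemma holte_eigvec_right:
  assumes "N \<ge> 1" and "j \<le> k"
  shows "is_right_eigvec N k (1 / real N ^ j) (holte_eigvec k j)"
  using holte_raw_eigvec_right[OF assms]
  by (simp add: is_right_eigvec_def holte_eigvec_def sum_divide_distrib[symmetric])

lemma holte_eigvec_reflect:
  assumes "i < k" and "j \<le> k"
  shows "holte_eigvec k j (k - 1 - i) = (-1) ^ j * holte_eigvec k j i"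
  using holte_raw_eigvec_reflect[OF assms] by (simp add: holte_eigvec_def)

section \<open>Worpitzky's identity\<close>

fun descents :: "'a :: linorder list \<Rightarrow> nat" where
  "descents [] = 0"
| "descents [x] = 0"
| "descents (x # y # zs) = (if y < x then 1 else 0) + descents (y # zs)"

lemma descents_Cons: "descents (x # zs) = (if zs \<noteq> [] \<and> hd zs < x then 1 else 0) + descents zs"
  by (cases zs) auto

definition insert_at :: "nat \<Rightarrow> 'a \<Rightarrow> 'a list \<Rightarrow> 'a list" where
  "insert_at p x ys = take p ys @ x # drop p ys"

lemma insert_at_0 [simp]: "insert_at 0 x ys = x # ys"
  by (simp add: insert_at_def)

lemma insert_at_Suc_Cons [simp]: "insert_at (Suc p) x (y # ys) = y # insert_at p x ys"
  by (simp add: insert_at_def)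

text \<open>The number of descents gained by inserting a new maximum at position \<open>p\<close>.\<close>

fun descent_gain :: "nat \<Rightarrow> 'a :: linorder list \<Rightarrow> nat" where
  "descent_gain 0 ys = (if ys = [] then 0 else 1)"
| "descent_gain (Suc 0) (x # ys) = (if ys \<noteq> [] \<and> \<not> hd ys < x then 1 else 0)"
| "descent_gain (Suc (Suc p)) (x # ys) = descent_gain (Suc p) ys"
| "descent_gain (Suc p) [] = 0"

lemma descent_gain_le_1: "descent_gain p ys \<le> 1"
  by (induction p ys rule: descent_gain.induct) auto

lemma descents_insert_at:
  assumes "\<forall>z\<in>set ys. z < M" and "p \<le> length ys"
  shows "descents (insert_at p M ys) = descents ys + descent_gain p ys"
  using assms
proof (induction ys arbitrary: p)
  case Nil
  then show ?case by simp
next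
  case (Cons x ys)
  show ?case
  proof (cases p)
    case 0
    then show ?thesis
      using Cons.prems by (simp add: descents_Cons)
  next
    case (Suc p')
    have IH: "descents (insert_at p' M ys) = descents ys + descent_gain p' ys"
      using Cons by (simp add: Suc)
    show ?thesis
    proof (cases p')
      case 0
      have "\<not> M < x"
        using Cons.prems by auto
      then show ?thesis
        using IH by (simp add: Suc 0 descents_Cons)
    next
      case (Suc p'')
      have "ys \<noteq> []"
        using Cons.prems \<open>p = Suc p'\<close> Suc by auto
      then have "hd (insert_at p' M ys) = hd ys"
        by (cases ys) (simp_all add: Suc)
      then show ?thesis
        using IH \<open>ys \<noteq> []\<close> by (simp add: \<open>p = Suc p'\<close> Suc descents_Cons insert_at_def)
    qed
  qed
qed

lemma sum_descent_gain: "(\<Sum>p\<le>length ys. descent_gain p ys) + descents ys = length ys"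
proof (induction ys)
  case Nil
  then show ?case by simp
next
  case (Cons x ys)
  show ?case
  proof (cases ys)
    case Nil
    then show ?thesis by simp
  next
    case (Cons y ys')
    have "(\<Sum>p\<le>length (x # ys). descent_gain p (x # ys))
        = 1 + (if \<not> y < x then 1 else 0) + (\<Sum>p\<le>length ys'. descent_gain (Suc p) ys)"
      and "(\<Sum>p\<le>length ys. descent_gain p ys) = 1 + (\<Sum>p\<le>length ys'. descent_gain (Suc p) ys)"
      by (simp_all add: Cons sum.atMost_Suc_shift del: sum.atMost_Suc)
    then show ?thesis
      using Cons.IH by (simp add: Cons)
  qed
qed

lemma permutations_of_set_Suc:
  "permutations_of_set {1..Suc n} = (\<lambda>(ys, p). insert_at p (Suc n) ys) ` (permutations_of_set {1..n} \<times> {..n})"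
proof (rule Set.set_eqI, rule iffI)
  fix zs assume zs: "zs \<in> permutations_of_set {1..Suc n}"
  then have "Suc n \<in> set zs"
    by (simp add: permutations_of_set_def)
  then obtain a b where ab: "zs = a @ Suc n # b"
    by (metis split_list)
  have dz: "distinct zs" and sz: "set zs = {1..Suc n}"
    using zs by (auto simp: permutations_of_set_def)
  have "a @ b \<in> permutations_of_set {1..n}"
  proof -
    have "Suc n \<notin> set a" "Suc n \<notin> set b"
      using dz ab by auto
    then have "set (a @ b) = set zs - {Suc n}"
      using ab by auto
    also have "\<dots> = {1..n}"
      using sz by (simp add: atLeastAtMostSuc_conv)
    finally show ?thesis
      using dz ab by (simp add: permutations_of_set_def)
  qed
  moreover have "length a \<le> n"
  proof -
    have "length zs = Suc n"
      using dz sz distinct_card by fastforce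
    then show ?thesis
      using ab by simp
  qed
  moreover have "zs = insert_at (length a) (Suc n) (a @ b)"
    using ab by (simp add: insert_at_def)
  ultimately show "zs \<in> (\<lambda>(ys, p). insert_at p (Suc n) ys) ` (permutations_of_set {1..n} \<times> {..n})"
    by (auto intro!: image_eqI[where x = "(a @ b, length a)"])
next
  fix zs assume "zs \<in> (\<lambda>(ys, p). insert_at p (Suc n) ys) ` (permutations_of_set {1..n} \<times> {..n})"
  then obtain ys p where ys: "ys \<in> permutations_of_set {1..n}" and zs: "zs = insert_at p (Suc n) ys"
    by auto
  have dy: "distinct ys" and sy: "set ys = {1..n}"
    using ys by (auto simp: permutations_of_set_def)
  have "set zs = insert (Suc n) (set (take p ys) \<union> set (drop p ys))"
    by (simp add: zs insert_at_def)
  also have "set (take p ys) \<union> set (drop p ys) = set ys"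
    by (metis set_append append_take_drop_id)
  finally have "set zs = {1..Suc n}"
    using sy by auto
  moreover have "distinct zs"
  proof -
    have "distinct (take p ys @ drop p ys)" and "Suc n \<notin> set ys"
      using dy sy by auto
    then show ?thesis
      unfolding zs insert_at_def
      by (auto simp del: append_take_drop_id dest: in_set_takeD in_set_dropD)
  qed
  ultimately show "zs \<in> permutations_of_set {1..Suc n}"
    by (simp add: permutations_of_set_def)
qed

lemma inj_on_insert_at:
  "inj_on (\<lambda>(ys, p). insert_at p (Suc n) ys) (permutations_of_set {1..n} \<times> {..n})"
proof (rule inj_onI, clarify)
  fix ys p ys' p'
  assume ys: "ys \<in> permutations_of_set {1..n}" and ys': "ys' \<in> permutations_of_set {1..n}"
    and p: "p \<le> n" and p': "p' \<le> n" and eq: "insert_at p (Suc n) ys = insert_at p' (Suc n) ys'"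
  have "set ys = {1..n}" and len: "length ys = n" "length ys' = n"
    using ys ys' by (auto simp: permutations_of_set_def dest!: distinct_card)
  then have nin: "Suc n \<notin> set (take p ys)" "Suc n \<notin> set (drop p ys)"
    by (auto dest: in_set_takeD in_set_dropD)
  have "take p ys @ Suc n # drop p ys = take p' ys' @ Suc n # drop p' ys'"
    using eq by (simp add: insert_at_def)
  then have "take p ys = take p' ys'" and "drop p ys = drop p' ys'"
    using append_Cons_eq_iff[OF nin] by auto
  then show "ys = ys' \<and> p = p'"
    using p p' len by (metis append_take_drop_id length_take min.absorb2)
qed

lemma sum_gchoose_descents_insert_at:
  fixes y :: real
  assumes ys: "ys \<in> permutations_of_set {1..n}"
  shows "(\<Sum>p\<le>n. (y + real (descents (insert_at p (Suc n) ys))) gchoose Suc n)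
       = y * ((y + real (descents ys)) gchoose n)"
proof -
  have len: "length ys = n" and less: "\<forall>z\<in>set ys. z < Suc n"
    using ys by (auto simp: permutations_of_set_def dest!: distinct_card)
  define a where "a = y + real (descents ys)"
  have gain: "(y + real (descents (insert_at p (Suc n) ys))) gchoose Suc n
        = (a gchoose Suc n) + real (descent_gain p ys) * (a gchoose n)" if "p \<le> n" for p
  proof -
    have d: "descents (insert_at p (Suc n) ys) = descents ys + descent_gain p ys"
      using descents_insert_at[OF less] that len by simp
    consider "descent_gain p ys = 0" | "descent_gain p ys = 1"
      using descent_gain_le_1[of p ys] by linarith
    then show ?thesis
    proof cases
      case 1
      then show ?thesis
        using d by (simp add: a_def)
    next
      case 2
      then have "y + real (descents (insert_at p (Suc n) ys)) = a + 1"
        using d by (simp add: a_def)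
      then show ?thesis
        using 2 gbinomial_Suc_Suc[of a n] by simp
    qed
  qed
  have "real (\<Sum>p\<le>n. descent_gain p ys) + real (descents ys) = real n"
    using sum_descent_gain[of ys] len by (metis of_nat_add)
  then have gain_sum: "(\<Sum>p\<le>n. real (descent_gain p ys)) = real n - real (descents ys)"
    by simp
  have "(\<Sum>p\<le>n. (y + real (descents (insert_at p (Suc n) ys))) gchoose Suc n)
      = real (Suc n) * (a gchoose Suc n) + (real n - real (descents ys)) * (a gchoose n)"
    by (simp add: gain sum.distrib sum_distrib_right[symmetric] gain_sum)
  also have "\<dots> = (a - real (descents ys)) * (a gchoose n)"
    using gbinomial_mult_1[of a n] by (simp add: algebra_simps)
  finally show ?thesis
    by (simp add: a_def)
qed

theorem worpitzky_lists:
  fixes y :: real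
  shows "(\<Sum>xs\<in>permutations_of_set {1..n}. (y + real (descents xs)) gchoose n) = y ^ n"
proof (induction n)
  case 0
  then show ?case by simp
next
  case (Suc n)
  have "(\<Sum>zs\<in>permutations_of_set {1..Suc n}. (y + real (descents zs)) gchoose Suc n)
      = (\<Sum>ys\<in>permutations_of_set {1..n}. \<Sum>p\<le>n. (y + real (descents (insert_at p (Suc n) ys))) gchoose Suc n)"
    by (subst permutations_of_set_Suc, subst sum.reindex[OF inj_on_insert_at])
      (simp add: sum.cartesian_product case_prod_beta)
  also have "\<dots> = y * (\<Sum>ys\<in>permutations_of_set {1..n}. (y + real (descents ys)) gchoose n)"
    by (simp add: sum_gchoose_descents_insert_at sum_distrib_left)
  also have "\<dots> = y * y ^ n"
    by (simp only: Suc.IH)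
  finally show ?case
    by simp
qed

lemma card_less_Suc_filter:
  "card {j. j < Suc m \<and> P j} = (if P 0 then 1 else 0) + card {j. j < m \<and> P (Suc j)}"
proof -
  have "{j. j < Suc m \<and> P j} = (if P 0 then {0} else {}) \<union> Suc ` {j. j < m \<and> P (Suc j)}"
    by (auto simp: less_Suc_eq_0_disj image_iff)
  moreover have "card ((if P 0 then {0} else {}) \<union> Suc ` {j. j < m \<and> P (Suc j)})
      = card (if P 0 then {0::nat} else {}) + card {j. j < m \<and> P (Suc j)}"
    by (subst card_Un_disjoint) (auto simp: card_image)
  ultimately show ?thesis
    by simp
qed

lemma descents_eq_card: "descents xs = card {j. Suc j < length xs \<and> xs ! Suc j < xs ! j}"
proof (induction xs rule: descents.induct)
  case (3 x y zs)
  have "{j. Suc j < length (x # y # zs) \<and> (x # y # zs) ! Suc j < (x # y # zs) ! j}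
      = {j. j < Suc (length zs) \<and> (x # y # zs) ! Suc j < (x # y # zs) ! j}"
    by auto
  moreover have "{j. j < length zs \<and> (y # zs) ! Suc j < (y # zs) ! j}
      = {j. Suc j < length (y # zs) \<and> (y # zs) ! Suc j < (y # zs) ! j}"
    by auto
  ultimately show ?case
    using "3.IH" by (simp add: card_less_Suc_filter)
qed simp_all

lemma descents_map_upt:
  "card {j \<in> {1..<n}. p (Suc j) < p j} = descents (map p [1..<Suc n])"
proof -
  have "descents (map p [1..<Suc n]) = card {j. Suc j < n \<and> p (Suc (Suc j)) < p (Suc j)}"
    unfolding descents_eq_card
    by (rule arg_cong[where f = card]) (auto simp: nth_map_upt simp del: upt_Suc)
  also have "\<dots> = card (Suc ` {j. Suc j < n \<and> p (Suc (Suc j)) < p (Suc j)})"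
    by (simp add: card_image)
  also have "Suc ` {j. Suc j < n \<and> p (Suc (Suc j)) < p (Suc j)} = {j \<in> {1..<n}. p (Suc j) < p j}"
    by (auto simp: image_iff Suc_le_eq gr0_conv_Suc)
  finally show ?thesis ..
qed

lemma bij_betw_permutes_permutations_of_set:
  "bij_betw (\<lambda>p. map p [1..<Suc n]) {p. p permutes {1..n}} (permutations_of_set {1..n})"
proof -
  let ?list = "\<lambda>p. map p [1..<Suc n]"
  let ?S = "{p. p permutes {1..n}}"
  have inj: "inj_on ?list ?S"
  proof (rule inj_onI)
    fix p q assume "p \<in> ?S" "q \<in> ?S" and "?list p = ?list q"
    then have "\<forall>x\<in>{1..n}. p x = q x" and "\<forall>x. x \<notin> {1..n} \<longrightarrow> p x = x \<and> q x = x"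
      by (auto simp: map_eq_conv permutes_not_in simp del: upt_Suc)
    then show "p = q"
      by (metis ext)
  qed
  have sub: "?list ` ?S \<subseteq> permutations_of_set {1..n}"
  proof
    fix xs assume "xs \<in> ?list ` ?S"
    then obtain p where p: "p permutes {1..n}" and xs: "xs = ?list p"
      by auto
    have "set xs = {1..n}"
      using xs permutes_image[OF p] by (simp del: upt_Suc add: atLeastLessThanSuc_atLeastAtMost)
    moreover have "distinct xs"
      unfolding xs by (simp add: distinct_map permutes_inj_on[OF p] del: upt_Suc)
    ultimately show "xs \<in> permutations_of_set {1..n}"
      by (simp add: permutations_of_set_def)
  qed
  have "card (?list ` ?S) = card ?S"
    by (rule card_image[OF inj])
  also have "\<dots> = card (permutations_of_set {1..n})"
    by (simp add: card_permutations)
  finally have "card (?list ` ?S) = card (permutations_of_set {1..n})" .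
  then have "?list ` ?S = permutations_of_set {1..n}"
    by (intro card_subset_eq sub) simp
  then show ?thesis
    using inj by (simp add: bij_betw_def)
qed

lemma sum_eulerian:
  assumes "n \<ge> 1"
  shows "(\<Sum>i<n. real (eulerian n i) * f i) = (\<Sum>xs\<in>permutations_of_set {1..n}. f (descents xs))"
proof -
  let ?S = "{p. p permutes {1..n}}"
  let ?des = "\<lambda>p. card {j \<in> {1..<n}. p (Suc j) < p j}"
  have des_less: "?des p < n" for p
  proof -
    have "?des p \<le> card {1..<n}"
      by (rule card_mono) auto
    then show ?thesis
      using assms by simp
  qed
  have "(\<Sum>i<n. real (eulerian n i) * f i) = (\<Sum>i<n. \<Sum>p\<in>{p\<in>?S. ?des p = i}. f (?des p))"
    by (simp add: eulerian_def)
  also have "\<dots> = (\<Sum>p\<in>?S. f (?des p))"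
    by (rule sum.group) (auto simp only: finite_permutations finite_atLeastAtMost image_subset_iff
        lessThan_iff des_less)
  also have "\<dots> = (\<Sum>p\<in>?S. f (descents (map p [1..<Suc n])))"
    by (simp only: descents_map_upt)
  also have "\<dots> = (\<Sum>xs\<in>permutations_of_set {1..n}. f (descents xs))"
    by (rule sum.reindex_bij_betw[OF bij_betw_permutes_permutations_of_set])
  finally show ?thesis .
qed

theorem worpitzky:
  fixes y :: real
  assumes "n \<ge> 1"
  shows "(\<Sum>i<n. real (eulerian n i) * ((y + real i) gchoose n)) = y ^ n"
  using sum_eulerian[OF assms, of "\<lambda>i. (y + real i) gchoose n"] worpitzky_lists[of y n] by simp

section \<open>Biorthogonality and uniqueness\<close>

definition left_poly :: "nat \<Rightarrow> nat \<Rightarrow> real poly" where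
  "left_poly k m = [:-1, 1:] ^ m * eulerian_poly (k - m)"

lemma left_u_eq: "m \<le> k \<Longrightarrow> left_u k m i = holte_raw_eigvec k m 0 * coeff (left_poly k m) i"
  by (simp add: left_u_def left_poly_def holte_raw_eigvec_0)

lemma coeff_eulerian_poly: "coeff (eulerian_poly n) c = (if c < n then real (eulerian n c) else 0)"
  by (simp add: eulerian_poly_def coeff_sum)

lemma sum_coeff_linear_factor:
  fixes Q :: "'a :: comm_ring_1 poly"
  assumes "coeff Q K = 0"
  shows "(\<Sum>c<Suc K. coeff ([:-1, 1:] * Q) c * g c) = (\<Sum>c<K. coeff Q c * (g (Suc c) - g c))"
proof -
  have "[:-1, 1:] * Q = pCons 0 Q - Q"
    by simp
  then have "(\<Sum>c<Suc K. coeff ([:-1, 1:] * Q) c * g c)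
      = (\<Sum>c<Suc K. coeff (pCons 0 Q) c * g c) - (\<Sum>c<Suc K. coeff Q c * g c)"
    by (simp add: left_diff_distrib sum_subtractf)
  also have "(\<Sum>c<Suc K. coeff (pCons 0 Q) c * g c) = (\<Sum>c<K. coeff Q c * g (Suc c))"
    by (subst sum.lessThan_Suc_shift) simp
  also have "(\<Sum>c<Suc K. coeff Q c * g c) = (\<Sum>c<K. coeff Q c * g c)"
    using assms by simp
  finally show ?thesis
    by (simp add: right_diff_distrib sum_subtractf)
qed

lemma worpitzky_linear_factor_power:
  fixes y :: real
  assumes n: "n \<ge> 1"
  shows "(\<Sum>c<n + m. coeff ([:-1, 1:] ^ m * eulerian_poly n) c * ((y + real c) gchoose (n + m))) = y ^ n"
proof (induction m)
  case 0
  show ?case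
    using worpitzky[OF n, of y] by (simp add: coeff_eulerian_poly)
next
  case (Suc m)
  let ?Q = "[:-1, 1:] ^ m * eulerian_poly n"
  have "degree (eulerian_poly n) \<le> n - 1"
    by (rule degree_le) (auto simp: coeff_eulerian_poly)
  then have "degree ?Q \<le> m + (n - 1)"
    using degree_mult_le[of "[:-1, 1::real:] ^ m" "eulerian_poly n"] degree_power_le[of "[:-1, 1::real:]" m]
    by simp
  then have top: "coeff ?Q (n + m) = 0"
    using n by (intro coeff_eq_0) linarith
  have Pascal: "((y + real (Suc c)) gchoose Suc (n + m)) - ((y + real c) gchoose Suc (n + m))
      = (y + real c) gchoose (n + m)" for c
  proof -
    have "y + real (Suc c) = (y + real c) + 1"
      by simp
    then show ?thesis
      by (simp only: gbinomial_Suc_Suc)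
  qed
  have "[:-1, 1:] ^ Suc m * eulerian_poly n = [:-1, 1:] * ?Q"
    by (simp only: power_Suc mult.assoc)
  then have "(\<Sum>c<n + Suc m. coeff ([:-1, 1:] ^ Suc m * eulerian_poly n) c * ((y + real c) gchoose (n + Suc m)))
      = (\<Sum>c<Suc (n + m). coeff ([:-1, 1:] * ?Q) c * ((y + real c) gchoose Suc (n + m)))"
    by (simp only: add_Suc_right)
  also have "\<dots> = (\<Sum>c<n + m. coeff ?Q c * ((y + real c) gchoose (n + m)))"
    by (simp only: sum_coeff_linear_factor[OF top] Pascal)
  also have "\<dots> = y ^ n"
    by (rule Suc.IH)
  finally show ?case .
qed

lemma left_poly_binom_poly:
  assumes "m < k"
  shows "(\<Sum>c<k. Polynomial.smult (coeff (left_poly k m) c) (binom_poly k c)) = monom 1 (k - m)"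
proof (rule poly_eq_poly_eq_iff[THEN iffD1], rule ext)
  fix y
  show "poly (\<Sum>c<k. Polynomial.smult (coeff (left_poly k m) c) (binom_poly k c)) y = poly (monom 1 (k - m)) y"
    using worpitzky_linear_factor_power[where n = "k - m" and y = y and m = m] assms
    by (simp add: poly_sum poly_binom_poly poly_monom left_poly_def)
qed

lemma holte_raw_eigvec_biorth:
  assumes "m < k" and "j < k"
  shows "(\<Sum>c<k. coeff (left_poly k m) c * holte_raw_eigvec k j c) = (if m = j then 1 else 0)"
  using arg_cong[OF left_poly_binom_poly[OF assms(1)], of "\<lambda>p. coeff p (k - j)"] assms
  by (auto simp: holte_raw_eigvec_def coeff_sum)

lemma left_u_holte_eigvec_biorth:
  assumes m: "m < k" and j: "j < k"
  shows "(\<Sum>c<k. left_u k m c * holte_eigvec k j c) = (if m = j then 1 else 0)"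
proof -
  have "(\<Sum>c<k. left_u k m c * holte_eigvec k j c)
      = holte_raw_eigvec k m 0 / holte_raw_eigvec k j 0
        * (\<Sum>c<k. coeff (left_poly k m) c * holte_raw_eigvec k j c)"
    using m by (simp add: left_u_eq holte_eigvec_def sum_distrib_left mult_ac)
  then show ?thesis
    using holte_raw_eigvec_biorth[OF m j] holte_raw_eigvec_0_nonzero[OF j] by simp
qed

text \<open>A one-sided inverse of a square matrix is two-sided.\<close>

lemma holte_eigvec_left_u_dual:
  assumes i: "i < k" and c: "c < k"
  shows "(\<Sum>l<k. holte_eigvec k l i * left_u k l c) = (if i = c then 1 else 0)"
proof -
  let ?U = "mat k k (\<lambda>(m, c). left_u k m c)"
  let ?V = "mat k k (\<lambda>(c, j). holte_eigvec k j c)"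
  have "?U * ?V = 1\<^sub>m k"
  proof (rule eq_matI)
    fix m j assume "m < dim_row (1\<^sub>m k)" "j < dim_col (1\<^sub>m k)"
    then have mj: "m < k" "j < k"
      by simp_all
    then have "(?U * ?V) $$ (m, j) = (\<Sum>c<k. left_u k m c * holte_eigvec k j c)"
      by (simp add: scalar_prod_def atLeast0LessThan)
    then show "(?U * ?V) $$ (m, j) = 1\<^sub>m k $$ (m, j)"
      using mj by (simp add: left_u_holte_eigvec_biorth)
  qed simp_all
  then have "?V * ?U = 1\<^sub>m k"
    by (rule mat_mult_left_right_inverse[rotated 2]) simp_all
  moreover have "(?V * ?U) $$ (i, c) = (\<Sum>l<k. holte_eigvec k l i * left_u k l c)"
    using i c by (simp add: scalar_prod_def atLeast0LessThan)
  ultimately show ?thesis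
    using i c by simp
qed

lemma holte_eigvec_expansion:
  assumes "i < k"
  shows "w i = (\<Sum>l<k. holte_eigvec k l i * (\<Sum>c<k. left_u k l c * w c))"
proof -
  have "(\<Sum>l<k. holte_eigvec k l i * (\<Sum>c<k. left_u k l c * w c))
      = (\<Sum>c<k. (\<Sum>l<k. holte_eigvec k l i * left_u k l c) * w c)"
    by (simp add: sum_distrib_left sum_distrib_right mult_ac) (rule sum.swap)
  also have "\<dots> = (\<Sum>c<k. if c = i then w c else 0)"
    by (rule sum.cong) (simp_all add: holte_eigvec_left_u_dual assms)
  also have "\<dots> = w i"
    using assms by simp
  finally show ?thesis ..
qed

lemma left_u_holte_T:
  assumes N: "N \<ge> 1" and m: "m < k"
  shows "(\<Sum>c<k. left_u k m c * (\<Sum>c'<k. holte_T N k c c' * w c'))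
       = 1 / real N ^ m * (\<Sum>c<k. left_u k m c * w c)"
proof -
  define s where "s l = (\<Sum>c<k. left_u k l c * w c)" for l
  have Tw: "(\<Sum>c'<k. holte_T N k c c' * w c') = (\<Sum>l<k. s l / real N ^ l * holte_eigvec k l c)"
    if c: "c < k" for c
  proof -
    have "(\<Sum>c'<k. holte_T N k c c' * w c')
        = (\<Sum>c'<k. holte_T N k c c' * (\<Sum>l<k. holte_eigvec k l c' * s l))"
      unfolding s_def by (intro sum.cong refl) (simp flip: holte_eigvec_expansion)
    also have "\<dots> = (\<Sum>l<k. s l * (\<Sum>c'<k. holte_T N k c c' * holte_eigvec k l c'))"
      by (simp add: sum_distrib_left sum_distrib_right mult_ac) (rule sum.swap)
    also have "\<dots> = (\<Sum>l<k. s l / real N ^ l * holte_eigvec k l c)"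
      using holte_eigvec_right[OF N] c by (intro sum.cong refl) (simp add: is_right_eigvec_def)
    finally show ?thesis .
  qed
  have "(\<Sum>c<k. left_u k m c * (\<Sum>c'<k. holte_T N k c c' * w c'))
      = (\<Sum>c<k. left_u k m c * (\<Sum>l<k. s l / real N ^ l * holte_eigvec k l c))"
    by (intro sum.cong refl) (simp add: Tw)
  also have "\<dots> = (\<Sum>l<k. s l / real N ^ l * (\<Sum>c<k. left_u k m c * holte_eigvec k l c))"
    by (simp add: sum_distrib_left sum_distrib_right mult_ac) (rule sum.swap)
  also have "\<dots> = (\<Sum>l<k. if l = m then s l / real N ^ l else 0)"
    using m by (intro sum.cong refl) (simp add: left_u_holte_eigvec_biorth)
  also have "\<dots> = s m / real N ^ m"
    using m by simp
  finally show ?thesis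
    by (simp add: s_def)
qed

lemma holte_eigvec_unique:
  assumes N: "N \<ge> 2" and j: "j < k" and w: "is_right_eigvec N k (1 / real N ^ j) w"
  shows "\<forall>i<k. w i = w 0 * holte_eigvec k j i"
proof -
  define s where "s l = (\<Sum>c<k. left_u k l c * w c)" for l
  have s_zero: "s l = 0" if l: "l < k" "l \<noteq> j" for l
  proof -
    have "(\<Sum>c<k. left_u k l c * (\<Sum>c'<k. holte_T N k c c' * w c'))
        = (\<Sum>c<k. left_u k l c * (1 / real N ^ j * w c))"
      using w by (auto simp: is_right_eigvec_def intro!: sum.cong)
    then have "1 / real N ^ l * s l = 1 / real N ^ j * s l"
      using left_u_holte_T[of N l k w] N l by (simp add: s_def sum_distrib_left mult_ac)
    moreover have "1 / real N ^ l \<noteq> 1 / real N ^ j"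
      using N l by (simp add: power_inject_exp)
    ultimately show ?thesis
      by simp
  qed
  have w_eq: "w i = holte_eigvec k j i * s j" if "i < k" for i
  proof -
    have "w i = (\<Sum>l<k. holte_eigvec k l i * s l)"
      unfolding s_def by (rule holte_eigvec_expansion[OF that])
    also have "\<dots> = holte_eigvec k j i * s j"
      using j s_zero by (subst sum.remove[of _ j]) (auto intro!: sum.neutral)
    finally show ?thesis .
  qed
  then show ?thesis
    using j holte_eigvec_0[OF j] by simp
qed

section \<open>The generating polynomial\<close>

lemma sum_choose_choose_power:
  fixes x :: real
  assumes "r \<le> n"
  shows "(\<Sum>i\<le>n. real (n choose i) * real (i choose r) * x ^ i) = real (n choose r) * x ^ r * (1 + x) ^ (n - r)"
proof -
  have "(\<Sum>i\<le>n. real (n choose i) * real (i choose r) * x ^ i)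
      = (\<Sum>i\<in>{r..n}. real (n choose i) * real (i choose r) * x ^ i)"
    by (rule sum.mono_neutral_right) auto
  also have "\<dots> = (\<Sum>s\<in>{0..n - r}. real (n choose (s + r)) * real ((s + r) choose r) * x ^ (s + r))"
  proof -
    have "{r..n} = {0 + r..(n - r) + r}"
      using assms by simp
    then show ?thesis
      by (simp only: sum.shift_bounds_cl_nat_ivl)
  qed
  also have "\<dots> = (\<Sum>s\<in>{0..n - r}. real (n choose r) * x ^ r * (real ((n - r) choose s) * x ^ s * 1 ^ (n - r - s)))"
  proof (rule sum.cong[OF refl])
    fix s assume "s \<in> {0..n - r}"
    then have "(n choose (s + r)) * ((s + r) choose r) = (n choose r) * ((n - r) choose s)"
      using choose_mult[of r "s + r" n] assms by simp
    then have "real (n choose (s + r)) * real ((s + r) choose r) = real (n choose r) * real ((n - r) choose s)"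
      by (metis of_nat_mult)
    then show "real (n choose (s + r)) * real ((s + r) choose r) * x ^ (s + r)
        = real (n choose r) * x ^ r * (real ((n - r) choose s) * x ^ s * 1 ^ (n - r - s))"
      by (simp add: power_add algebra_simps)
  qed
  also have "\<dots> = real (n choose r) * x ^ r * (x + 1) ^ (n - r)"
    by (simp add: binomial_ring sum_distrib_left atLeast0AtMost)
  finally show ?thesis
    by (simp add: add.commute)
qed

definition eigvec_gen_poly :: "nat \<Rightarrow> nat \<Rightarrow> real poly" where
  "eigvec_gen_poly k j = (\<Sum>i<k. monom (real ((k - 1) choose i) * holte_eigvec k j i) i)"

lemma coeff_eigvec_gen_poly:
  "coeff (eigvec_gen_poly k j) n = (if n < k then real ((k - 1) choose n) * holte_eigvec k j n else 0)"
  by (simp add: eigvec_gen_poly_def coeff_sum)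

lemma poly_eigvec_gen_poly:
  "poly (eigvec_gen_poly k j) x = (\<Sum>i<k. real ((k - 1) choose i) * holte_eigvec k j i * x ^ i)"
  by (simp add: eigvec_gen_poly_def poly_sum poly_monom)

lemma eigvec_gen_poly_expand:
  assumes j: "j < k"
  shows "eigvec_gen_poly k j = Polynomial.smult (1 / holte_raw_eigvec k j 0)
    (\<Sum>r\<le>j. Polynomial.smult (coeff (binom_poly (k - r) 0) (k - j) * real ((k - 1) choose r))
                 (monom 1 r * [:1, 1:] ^ (k - 1 - r)))"
proof (rule poly_eq_poly_eq_iff[THEN iffD1], rule ext)
  fix x :: real
  let ?e = "\<lambda>r. coeff (binom_poly (k - r) 0) (k - j)"
  have k: "{..<k} = {..k - 1}"
    using j by auto
  have "(\<Sum>i<k. real ((k - 1) choose i) * holte_raw_eigvec k j i * x ^ i)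
      = (\<Sum>i<k. real ((k - 1) choose i) * (\<Sum>r\<le>j. real (i choose r) * ?e r) * x ^ i)"
    using j by (simp add: holte_raw_eigvec_expand)
  also have "\<dots> = (\<Sum>r\<le>j. ?e r * (\<Sum>i\<le>k - 1. real ((k - 1) choose i) * real (i choose r) * x ^ i))"
    unfolding k by (simp add: sum_distrib_left sum_distrib_right mult_ac) (rule sum.swap)
  also have "\<dots> = (\<Sum>r\<le>j. ?e r * real ((k - 1) choose r) * (x ^ r * (1 + x) ^ (k - 1 - r)))"
    using j by (intro sum.cong refl) (simp add: sum_choose_choose_power)
  finally have "(\<Sum>i<k. real ((k - 1) choose i) * holte_raw_eigvec k j i * x ^ i)
      = (\<Sum>r\<le>j. ?e r * real ((k - 1) choose r) * (x ^ r * (1 + x) ^ (k - 1 - r)))" .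
  then show "poly (eigvec_gen_poly k j) x = poly (Polynomial.smult (1 / holte_raw_eigvec k j 0)
    (\<Sum>r\<le>j. Polynomial.smult (?e r * real ((k - 1) choose r)) (monom 1 r * [:1, 1:] ^ (k - 1 - r)))) x"
    by (simp add: poly_eigvec_gen_poly poly_sum poly_monom holte_eigvec_def sum_divide_distrib[symmetric]
        mult_ac add.commute[of 1])
qed

lemma eigvec_gen_poly_dvd:
  assumes "j < k"
  shows "[:1, 1:] ^ (k - 1 - j) dvd eigvec_gen_poly k j"
proof -
  have "[:1, 1:] ^ (k - 1 - j) dvd monom 1 r * [:1, 1::real:] ^ (k - 1 - r)" if "r \<le> j" for r
    using that by (intro dvd_mult le_imp_power_dvd) simp
  then show ?thesis
    unfolding eigvec_gen_poly_expand[OF assms] by (intro dvd_smult dvd_sum) simp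
qed

lemma degree_eigvec_gen_poly:
  assumes j: "j < k"
  shows "degree (eigvec_gen_poly k j) = k - 1"
proof (rule antisym)
  show "degree (eigvec_gen_poly k j) \<le> k - 1"
    by (rule degree_le) (simp add: coeff_eigvec_gen_poly)
  have "holte_eigvec k j (k - 1 - 0) = (-1) ^ j"
    using j holte_eigvec_reflect[of 0 k j] holte_eigvec_0 by simp
  then have "coeff (eigvec_gen_poly k j) (k - 1) \<noteq> 0"
    using j by (simp add: coeff_eigvec_gen_poly)
  then show "k - 1 \<le> degree (eigvec_gen_poly k j)"
    by (rule le_degree)
qed

lemma reflect_eigvec_gen_poly:
  assumes j: "j < k"
  shows "reflect_poly (eigvec_gen_poly k j) = Polynomial.smult ((-1) ^ j) (eigvec_gen_poly k j)"
proof (rule poly_eqI)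
  fix n
  show "coeff (reflect_poly (eigvec_gen_poly k j)) n = coeff (Polynomial.smult ((-1) ^ j) (eigvec_gen_poly k j)) n"
  proof (cases "n < k")
    case True
    have "(k - 1) choose (k - 1 - n) = (k - 1) choose n"
      using True by (intro binomial_symmetric[symmetric]) simp
    moreover have "holte_eigvec k j (k - 1 - n) = (-1) ^ j * holte_eigvec k j n"
      using True j by (intro holte_eigvec_reflect) simp_all
    ultimately show ?thesis
      using True j by (simp add: coeff_reflect_poly degree_eigvec_gen_poly coeff_eigvec_gen_poly)
  qed (auto simp: coeff_reflect_poly degree_eigvec_gen_poly[OF j] coeff_eigvec_gen_poly)
qed

lemma reflect_poly_one_plus_x: "reflect_poly [:1, 1:] = [:1, 1 :: 'a :: comm_semiring_1:]"
  by (rule poly_eqI) (simp add: coeff_reflect_poly coeff_pCons split: nat.split)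

lemma eigvec_gen_poly_factor:
  assumes j: "j < k"
  obtains Q where "eigvec_gen_poly k j = [:1, 1:] ^ (k - 1 - j) * Q" and "degree Q = j"
    and "poly Q 0 = 1" and "reflect_poly Q = Polynomial.smult ((-1) ^ j) Q"
proof -
  let ?P = "[:1, 1::real:] ^ (k - 1 - j)"
  obtain Q where V: "eigvec_gen_poly k j = ?P * Q"
    using eigvec_gen_poly_dvd[OF j] by (elim dvdE)
  have "poly (eigvec_gen_poly k j) 0 = 1"
    using j by (simp add: poly_0_coeff_0 coeff_eigvec_gen_poly holte_eigvec_0)
  then have Q0: "poly Q 0 = 1"
    by (simp add: V)
  then have "Q \<noteq> 0"
    by auto
  then have "k - 1 = (k - 1 - j) + degree Q"
    using degree_eigvec_gen_poly[OF j] by (simp add: V degree_mult_eq degree_linear_power)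
  then have "degree Q = j"
    using j by linarith
  have "?P * reflect_poly Q = ?P * Polynomial.smult ((-1) ^ j) Q"
    using reflect_eigvec_gen_poly[OF j]
    by (simp add: V reflect_poly_mult reflect_poly_power reflect_poly_one_plus_x)
  moreover have "?P \<noteq> 0"
    by simp
  ultimately have "reflect_poly Q = Polynomial.smult ((-1) ^ j) Q"
    by (metis mult_left_cancel)
  then show ?thesis
    using that V \<open>degree Q = j\<close> Q0 by blast
qed

lemma holte_eigvec_generating_function:
  assumes j: "j < k"
  shows "\<exists>Q :: real poly. degree Q = j \<and> poly Q 0 = 1
    \<and> (\<forall>x::real. x \<noteq> 0 \<longrightarrow> x ^ j * poly Q (1 / x) = (-1) ^ j * poly Q x)
    \<and> (\<forall>x::real. (\<Sum>i<k. real ((k - 1) choose i) * holte_eigvec k j i * x ^ i)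
                   = (1 + x) ^ (k - 1 - j) * poly Q x)"
proof -
  obtain Q where V: "eigvec_gen_poly k j = [:1, 1:] ^ (k - 1 - j) * Q" and deg: "degree Q = j"
    and "poly Q 0 = 1" and reflect: "reflect_poly Q = Polynomial.smult ((-1) ^ j) Q"
    using eigvec_gen_poly_factor[OF j] by blast
  have "x ^ j * poly Q (1 / x) = (-1) ^ j * poly Q x" if "x \<noteq> 0" for x :: real
    using poly_reflect_poly_nz[OF that, of Q] by (simp add: reflect deg inverse_eq_divide)
  moreover have "(\<Sum>i<k. real ((k - 1) choose i) * holte_eigvec k j i * x ^ i)
      = (1 + x) ^ (k - 1 - j) * poly Q x" for x :: real
    using arg_cong[OF V, of "\<lambda>p. poly p x"] by (simp add: poly_eigvec_gen_poly poly_power)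
  ultimately show ?thesis
    using deg \<open>poly Q 0 = 1\<close> by blast
qed

section \<open>Special eigenvectors\<close>

lemma holte_eigvec_zero: "0 < k \<Longrightarrow> holte_eigvec k 0 i = 1"
  using holte_raw_eigvec_0_nonzero[of 0 k] by (simp add: holte_eigvec_def holte_raw_eigvec_expand)

lemma holte_eigvec_one:
  assumes k: "2 \<le> k" and i: "i < k"
  shows "holte_eigvec k 1 i = (real k - 1 - 2 * real i) / (real k - 1)"
proof -
  define e where "e r = coeff (binom_poly (k - r) 0) (k - 1)" for r
  have raw: "holte_raw_eigvec k 1 i' = e 0 + real i' * e 1" for i'
    using k by (simp add: holte_raw_eigvec_expand e_def)
  have "e 0 \<noteq> 0"
    using holte_raw_eigvec_0_nonzero[of 1 k] k raw[of 0] by simp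
  have "holte_raw_eigvec k 1 (k - 1) = - holte_raw_eigvec k 1 0"
    using holte_raw_eigvec_reflect[of 0 k 1] k by simp
  then have "e 0 + real (k - 1) * e 1 = - e 0"
    unfolding raw by simp
  then have slope: "(real k - 1) * e 1 = - 2 * e 0"
    using k by (simp add: of_nat_diff algebra_simps)
  have "(e 0 + real i * e 1) * (real k - 1) = e 0 * (real k - 1) + real i * ((real k - 1) * e 1)"
    by (simp add: algebra_simps)
  also have "\<dots> = (real k - 1 - 2 * real i) * e 0"
    by (simp only: slope) (simp add: algebra_simps)
  finally have "(e 0 + real i * e 1) * (real k - 1) = (real k - 1 - 2 * real i) * e 0" .
  then show ?thesis
    unfolding holte_eigvec_def raw using \<open>e 0 \<noteq> 0\<close> k by (simp add: frac_eq_eq)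
qed

lemma prod_nat_diff_atLeast0LessThan: "(\<Prod>t\<in>{0..<i}. real i - real t) = fact i"
proof -
  have "(\<Prod>t\<in>{0..<i}. real i - real t) = (\<Prod>t\<in>{0..<i}. real i - real (i + 0 - Suc t))"
    by (rule prod.atLeastLessThan_rev)
  also have "\<dots> = (\<Prod>t\<in>{0..<i}. 1 + real t)"
    by (rule prod.cong) (auto simp: of_nat_diff)
  finally show ?thesis
    by (simp add: pochhammer_prod pochhammer_fact)
qed

lemma prod_nat_diff_SucLessThan:
  assumes "i < k"
  shows "(\<Prod>t\<in>{Suc i..<k}. real i - real t) = (-1) ^ (k - Suc i) * fact (k - Suc i)"
proof -
  have "{Suc i..<k} = {0 + Suc i..<(k - Suc i) + Suc i}"
    using assms by simp
  then have "(\<Prod>t\<in>{Suc i..<k}. real i - real t) = (\<Prod>s\<in>{0..<k - Suc i}. real i - real (s + Suc i))"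
    by (simp only: prod.shift_bounds_nat_ivl)
  also have "\<dots> = (\<Prod>s\<in>{0..<k - Suc i}. (-1) * (1 + real s))"
    by (rule prod.cong) auto
  also have "\<dots> = (\<Prod>s\<in>{0..<k - Suc i}. (-1::real)) * (\<Prod>s\<in>{0..<k - Suc i}. 1 + real s)"
    by (rule prod.distrib)
  also have "(\<Prod>s\<in>{0..<k - Suc i}. 1 + real s) = fact (k - Suc i)"
    by (simp add: pochhammer_prod pochhammer_fact)
  finally show ?thesis
    by simp
qed

text \<open>For \<open>j = k - 1\<close> one needs the linear coefficient of \<open>(y + i) gchoose k\<close>; it is the product of the
  constant terms of the other factors, since the factor \<open>t = i\<close> is \<open>y\<close> itself.\<close>

lemma holte_raw_eigvec_last:
  assumes i: "i < k"
  shows "holte_raw_eigvec k (k - 1) i = fact i * (-1) ^ (k - Suc i) * fact (k - Suc i) / fact k"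
proof -
  let ?L = "\<lambda>t. [:real i - real t, 1:]"
  let ?A = "\<Prod>t\<in>{0..<i}. ?L t"
  let ?B = "\<Prod>t\<in>{Suc i..<k}. ?L t"
  have "(\<Prod>t<k. ?L t) = ?A * (\<Prod>t\<in>{i..<k}. ?L t)"
    using i by (simp add: atLeast0LessThan[symmetric] prod.atLeastLessThan_concat)
  also have "(\<Prod>t\<in>{i..<k}. ?L t) = [:0, 1:] * ?B"
    using i by (simp add: prod.atLeast_Suc_lessThan)
  finally have "(\<Prod>t<k. ?L t) = pCons 0 (?A * ?B)"
    by simp
  then have "holte_raw_eigvec k (k - 1) i = 1 / fact k * coeff (?A * ?B) 0"
    using i by (simp add: holte_raw_eigvec_def binom_poly_def)
  also have "coeff (?A * ?B) 0 = poly ?A 0 * poly ?B 0"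
    by (simp add: poly_0_coeff_0[symmetric])
  finally have "holte_raw_eigvec k (k - 1) i = 1 / fact k * (poly ?A 0 * poly ?B 0)" .
  then show ?thesis
    using i by (simp add: poly_prod prod_nat_diff_atLeast0LessThan prod_nat_diff_SucLessThan)
qed

lemma holte_eigvec_last:
  assumes i: "i < k"
  shows "holte_eigvec k (k - 1) i = (-1) ^ i / real ((k - 1) choose i)"
proof -
  have raw_0: "holte_raw_eigvec k (k - 1) 0 = (-1) ^ (k - 1) * fact (k - 1) / fact k"
    using holte_raw_eigvec_last[of 0 k] i by simp
  have choose: "real ((k - 1) choose i) = fact (k - 1) / (fact i * fact (k - Suc i))"
    using binomial_fact[of i "k - 1", where 'a = real] i by simp
  have sign: "(-1::real) ^ (k - 1) = (-1) ^ (k - Suc i) * (-1) ^ i"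
    using i by (simp flip: power_add)
  have "(-1::real) ^ i * (-1) ^ i = 1"
    by (simp flip: power_add mult_2)
  then show ?thesis
    unfolding holte_eigvec_def holte_raw_eigvec_last[OF i] raw_0 choose sign
    by (simp add: field_simps)
qed

theorem mainTheorem6:
  fixes N k :: nat
  assumes "k \<ge> 2" and "N \<ge> 2"
  shows "\<forall>j<k. \<exists>v :: nat \<Rightarrow> real.
     is_right_eigvec N k (1 / real N ^ j) v \<and> v 0 = 1
   \<and> (\<forall>w. is_right_eigvec N k (1 / real N ^ j) w \<longrightarrow> (\<forall>i<k. w i = w 0 * v i))
   \<and> (\<exists>Q :: real poly. degree Q = j \<and> poly Q 0 = 1
        \<and> (\<forall>x::real. x \<noteq> 0 \<longrightarrow> x ^ j * poly Q (1 / x) = (-1) ^ j * poly Q x)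
        \<and> (\<forall>x::real. (\<Sum>i<k. real ((k - 1) choose i) * v i * x ^ i)
                       = (1 + x) ^ (k - 1 - j) * poly Q x))
   \<and> (\<forall>i<k. v (k - 1 - i) = (-1) ^ j * v i)
   \<and> (\<forall>m<k. (\<Sum>i<k. left_u k m i * v i) = (if m = j then 1 else 0))
   \<and> (j = 0 \<longrightarrow> (\<forall>i<k. v i = 1))
   \<and> (j = 1 \<longrightarrow> (\<forall>i<k. v i = (real k - 1 - 2 * real i) / (real k - 1)))
   \<and> (j = k - 1 \<longrightarrow> (\<forall>i<k. v i = (-1) ^ i / real ((k - 1) choose i)))"
proof (intro allI impI, goal_cases)
  case (1 j)
  have N: "N \<ge> 1"
    using assms(2) by simp
  show ?case
    using holte_eigvec_right[OF N, of j k] holte_eigvec_0[OF 1] holte_eigvec_unique[OF assms(2) 1]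
      holte_eigvec_generating_function[OF 1] holte_eigvec_reflect[of _ k j]
      left_u_holte_eigvec_biorth[of _ k j] holte_eigvec_zero[of k] holte_eigvec_one[OF assms(1)]
      holte_eigvec_last[of _ k] 1
    by (intro exI[of _ "holte_eigvec k j"]) auto
qed

end
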